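(* Fix $\eta\in[0,1]$ and an integer $N\ge0$. Let $\mathcal V$ be the set of PMFs $v$ on $\mathcal S\times\mathcal U\times\mathcal Q\times\mathcal X\times\mathcal S\times\mathcal U\times\mathcal Q$ whose support is contained in the set $\mathcal A$ of tuples $(s,u,q,x,s^{+},u^{+},q^{+})$ with $u\in[0:q]$ and $u^{+}\in\{0,u+1\}$ if $q\le N-1$, $u\in[0:N]$ and $u^{+}=0$ if $q=N$, $x=f(u^{+},s)$ and $q^{+}=g_L(q,x)$, and which satisfy: (1) (stationarity) $v_{S,U,Q}(s,u,q)=v_{S^{+},U^{+},Q^{+}}(s,u,q)$ for all $(s,u,q)$; (2) (state law) $v(s,u,q,x,s^{+},u^{+},q^{+})=\Big(\sum_{\tilde s^{+}}v(s,u,q,x,\tilde s^{+},u^{+},q^{+})\Big)P(s^{+}\mid x,s)$ for all tuples in $\mathcal A$; (3) (policy) $v_{S,U,Q,U^{+}}(0,u,q,u^{+})=\bar\eta^{\,u+1}\,v_{U,Q,U^{+}}(u,q,u^{+})$ for all $(u,q,u^{+})$; (4) $\sum v=1$, $v\ge0$. Then the problem of maximizing $I_v(U^{+},U;X\mid Q)$ (conditional mutual information under $v$) over $v\in\mathcal V$ is a convex optimization problem: all constraints are linear equalities/nonnegativity in $v$, and the objective is concave in $v$ on $\mathcal V$.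
   Context: $\bar\eta=1-\eta$, $[a:b]=\{a,\dots,b\}$, $\mathcal S=\mathcal X=\{0,1\}$, $\mathcal U=\mathcal Q=[0:N]$. $f(u^{+},s)=s\,\mathbb{1}\{u^{+}=0\}$. $g_L:\mathcal Q\times\{0,1\}\to\mathcal Q$ is given by $g_L(q,1)=0$ for all $q$, $g_L(q,0)=q+1$ for $q\in[0:N-1]$, $g_L(N,0)=0$. $P(s^{+}\mid x,s)$ is the battery law of the binary energy-harvesting channel: $P(S^{+}=0\mid x,s)=\bar\eta\,\mathbb{1}\{x=s\}$ and $P(S^{+}=1\mid x,s)=1-\bar\eta\,\mathbb{1}\{x=s\}$ for $x\le s$. Marginals of $v$ are denoted by subscripts, e.g. $v_{S,U,Q}$. *)

theory Defs
  imports "HOL-Analysis.Analysis" "HOL-Library.Function_Algebras"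
begin

text \<open>Real-valued functions (here: unnormalised PMFs on a tuple type) form a real vector
  space under pointwise operations; this lets us use the library notions convex / concave_on.\<close>

instantiation "fun" :: (type, real_vector) real_vector
begin
definition scaleR_fun :: "real \<Rightarrow> ('a \<Rightarrow> 'b) \<Rightarrow> 'a \<Rightarrow> 'b"
  where "scaleR_fun r f = (\<lambda>x. r *\<^sub>R f x)"
instance
  by standard (auto simp: scaleR_fun_def fun_eq_iff scaleR_add_right scaleR_add_left)
end

type_synonym tup = "nat \<times> nat \<times> nat \<times> nat \<times> nat \<times> nat \<times> nat"
  \<comment> \<open>(s, u, q, x, s+, u+, q+)\<close>

definition f_enc :: "nat \<Rightarrow> nat \<Rightarrow> nat" where
  "f_enc up s = (if up = 0 then s else 0)"

definition gL :: "nat \<Rightarrow> nat \<Rightarrow> nat \<Rightarrow> nat" where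
  "gL N q x = (if x = 1 then 0 else if q < N then q + 1 else 0)"

text \<open>Battery law P(s+ | x, s) of the binary energy-harvesting channel.\<close>
definition Pbat :: "real \<Rightarrow> nat \<Rightarrow> nat \<Rightarrow> nat \<Rightarrow> real" where
  "Pbat \<eta> sp x s = (if sp = 0 then (1 - \<eta>) * (if x = s then 1 else 0)
                     else 1 - (1 - \<eta>) * (if x = s then 1 else 0))"

definition Sset :: "nat set" where "Sset = {0, 1}"

definition Aset :: "nat \<Rightarrow> tup set" where
  "Aset N = {(s, u, q, x, sp, up, qp).
     s \<in> Sset \<and> sp \<in> Sset \<and> q \<in> {0..N} \<and>
     (if q < N then u \<in> {0..q} \<and> up \<in> {0, u + 1}
      else u \<in> {0..N} \<and> up = 0) \<and>
     x = f_enc up s \<and> qp = gL N q x}"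

definition Dset :: "nat \<Rightarrow> tup set" where
  "Dset N = Sset \<times> {0..N} \<times> {0..N} \<times> Sset \<times> Sset \<times> {0..N} \<times> {0..N}"

definition Vset :: "real \<Rightarrow> nat \<Rightarrow> (tup \<Rightarrow> real) set" where
  "Vset \<eta> N = {v.
     (\<forall>t. t \<notin> Aset N \<longrightarrow> v t = 0) \<and>
     \<comment> \<open>(1) stationarity\<close>
     (\<forall>s\<in>Sset. \<forall>u\<in>{0..N}. \<forall>q\<in>{0..N}.
        (\<Sum>(x, sp, up, qp) \<in> Sset \<times> Sset \<times> {0..N} \<times> {0..N}. v (s, u, q, x, sp, up, qp))
      = (\<Sum>(s', u', q', x) \<in> Sset \<times> {0..N} \<times> {0..N} \<times> Sset. v (s', u', q', x, s, u, q))) \<and>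
     \<comment> \<open>(2) state law\<close>
     (\<forall>(s, u, q, x, sp, up, qp) \<in> Aset N.
        v (s, u, q, x, sp, up, qp)
      = (\<Sum>sp'\<in>Sset. v (s, u, q, x, sp', up, qp)) * Pbat \<eta> sp x s) \<and>
     \<comment> \<open>(3) policy\<close>
     (\<forall>u\<in>{0..N}. \<forall>q\<in>{0..N}. \<forall>up\<in>{0..N}.
        (\<Sum>(x, sp, qp) \<in> Sset \<times> Sset \<times> {0..N}. v (0, u, q, x, sp, up, qp))
      = (1 - \<eta>) ^ (u + 1) *
        (\<Sum>(s, x, sp, qp) \<in> Sset \<times> Sset \<times> Sset \<times> {0..N}. v (s, u, q, x, sp, up, qp))) \<and>
     \<comment> \<open>(4) normalisation and nonnegativity\<close>
     (\<Sum>t\<in>Dset N. v t) = 1 \<and> (\<forall>t. v t \<ge> 0)}"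

definition cond_mutual_info ::
  "('a \<times> 'b \<times> 'c \<Rightarrow> real) \<Rightarrow> 'a set \<Rightarrow> 'b set \<Rightarrow> 'c set \<Rightarrow> real" where
  "cond_mutual_info p A B C =
     (\<Sum>(a, b, c) \<in> A \<times> B \<times> C.
        let pabc = p (a, b, c);
            pc = (\<Sum>(a', b') \<in> A \<times> B. p (a', b', c));
            pac = (\<Sum>b'\<in>B. p (a, b', c));
            pbc = (\<Sum>a'\<in>A. p (a', b, c))
        in if pabc = 0 then 0 else pabc * log 2 (pabc * pc / (pac * pbc)))"

text \<open>I_v(U+,U; X | Q): A = (U+, U), B = X, C = Q.\<close>
definition objective :: "nat \<Rightarrow> (tup \<Rightarrow> real) \<Rightarrow> real" where
  "objective N v = cond_mutual_info
     (\<lambda>((up, u), x, q). \<Sum>(s, sp, qp) \<in> Sset \<times> Sset \<times> {0..N}. v (s, u, q, x, sp, up, qp))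
     ({0..N} \<times> {0..N}) Sset {0..N}"

end

theory Submission
  imports Defs
begin

text \<open>All constraints defining \<open>\<V>\<close> are linear equations and inequalities, so \<open>\<V>\<close> is convex.
  For the objective write \<open>I(U\<^sup>+,U;X|Q) = H(X|Q) - H(X|U\<^sup>+,U,Q)\<close>. Every \<open>v \<in> \<V>\<close> has the same
  conditional law of \<open>X\<close> given \<open>(U\<^sup>+,U)\<close>: \<open>X = f(U\<^sup>+,S)\<close> is \<open>0\<close> when \<open>U\<^sup>+ \<noteq> 0\<close>, and equals \<open>S\<close>
  when \<open>U\<^sup>+ = 0\<close>, where the policy constraint forces \<open>P(S = 0 | U = u, Q = q, U\<^sup>+ = 0) = (1-\<eta>)\<^bsup>u+1\<^esup>\<close>.
  Hence \<open>H(X|U\<^sup>+,U,Q)\<close> is linear in \<open>v\<close>, whereas \<open>-H(X|Q) = \<Sum> p(x,q) ln (p(x,q) / p(q))\<close> is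
  convex in \<open>v\<close> by the joint convexity of \<open>(y, z) \<mapsto> y ln (y / z)\<close>, which follows from the
  tangent bound \<open>y ln (y / z) \<ge> y ln r + y - z r\<close>.\<close>

definition rel_entr :: "real \<Rightarrow> real \<Rightarrow> real" where
  "rel_entr y z = (if y = 0 then 0 else y * ln (y / z))"
  \<comment> \<open>For \<open>y \<noteq> 0\<close> the junk value \<open>rel_entr y 0 = 0\<close> breaks convexity, hence the hypotheses \<open>y \<le> z\<close> below.\<close>

lemma rel_entr_mult_self: "rel_entr (\<alpha> * z) z = z * rel_entr \<alpha> 1"
  by (simp add: rel_entr_def)

lemma rel_entr_ge_tangent:
  assumes "0 \<le> y" "y \<le> z" "0 < r"
  shows "y * ln r + y - z * r \<le> rel_entr y z"
proof (cases "y = 0")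
  case True
  then show ?thesis using assms by (simp add: rel_entr_def)
next
  case False
  with assms have "0 < y" "0 < z" by auto
  then have "ln (z * r / y) \<le> z * r / y - 1"
    using assms by (intro ln_le_minus_one) simp
  also have "ln (z * r / y) = ln z + ln r - ln y"
    using \<open>0 < y\<close> \<open>0 < z\<close> assms by (simp add: ln_div ln_mult)
  finally have "y * (ln z + ln r - ln y) \<le> y * (z * r / y - 1)"
    using \<open>0 < y\<close> by simp
  then show ?thesis
    using \<open>0 < y\<close> \<open>0 < z\<close> False by (simp add: rel_entr_def ln_div algebra_simps)
qed

lemma rel_entr_comb_le:
  assumes "0 \<le> y\<^sub>1" "y\<^sub>1 \<le> z\<^sub>1" "0 \<le> y\<^sub>2" "y\<^sub>2 \<le> z\<^sub>2" "0 \<le> t" "0 \<le> s"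
  shows "rel_entr (t * y\<^sub>1 + s * y\<^sub>2) (t * z\<^sub>1 + s * z\<^sub>2) \<le> t * rel_entr y\<^sub>1 z\<^sub>1 + s * rel_entr y\<^sub>2 z\<^sub>2"
proof -
  define Y where "Y = t * y\<^sub>1 + s * y\<^sub>2"
  define Z where "Z = t * z\<^sub>1 + s * z\<^sub>2"
  show ?thesis
  proof (cases "Y = 0")
    case True
    then have "t * y\<^sub>1 = 0" "s * y\<^sub>2 = 0"
      using assms by (auto simp: Y_def add_nonneg_eq_0_iff)
    then show ?thesis
      using True by (auto simp: Y_def rel_entr_def)
  next
    case False
    have "0 \<le> Y" "Y \<le> Z"
      using assms by (auto simp: Y_def Z_def intro: add_mono mult_left_mono)
    with False have "0 < Y" by simp
    define r where "r = Y / Z"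
    have "0 < r" using \<open>0 < Y\<close> \<open>Y \<le> Z\<close> by (simp add: r_def)
    have "rel_entr Y Z = Y * ln r + Y - Z * r"
      using \<open>0 < Y\<close> \<open>Y \<le> Z\<close> by (simp add: rel_entr_def r_def)
    also have "\<dots> = t * (y\<^sub>1 * ln r + y\<^sub>1 - z\<^sub>1 * r) + s * (y\<^sub>2 * ln r + y\<^sub>2 - z\<^sub>2 * r)"
      by (simp add: Y_def Z_def algebra_simps)
    also have "\<dots> \<le> t * rel_entr y\<^sub>1 z\<^sub>1 + s * rel_entr y\<^sub>2 z\<^sub>2"
      using assms \<open>0 < r\<close> by (intro add_mono mult_left_mono rel_entr_ge_tangent)
    finally show ?thesis by (simp add: Y_def Z_def)
  qed
qed

lemma sum_fiber_le_sum_Times: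
  fixes p :: "'a \<times> 'b \<times> 'c \<Rightarrow> real"
  assumes "finite A" "finite B" "b \<in> B"
    and "\<And>a b'. a \<in> A \<Longrightarrow> b' \<in> B \<Longrightarrow> 0 \<le> p (a, b', c)"
  shows "(\<Sum>a\<in>A. p (a, b, c)) \<le> (\<Sum>(a, b')\<in>A \<times> B. p (a, b', c))"
proof -
  have "(\<Sum>a\<in>A. p (a, b, c)) \<le> (\<Sum>a\<in>A. \<Sum>b'\<in>B. p (a, b', c))"
    using assms by (intro sum_mono member_le_sum) auto
  also have "\<dots> = (\<Sum>(a, b')\<in>A \<times> B. p (a, b', c))"
    by (simp add: sum.cartesian_product)
  finally show ?thesis .
qed

lemma cond_mutual_info_eq_rel_entr:
  fixes p :: "'a \<times> 'b \<times> 'c \<Rightarrow> real"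
  assumes fin: "finite A" "finite B"
    and nonneg: "\<And>a b c. a \<in> A \<Longrightarrow> b \<in> B \<Longrightarrow> c \<in> C \<Longrightarrow> 0 \<le> p (a, b, c)"
  shows "cond_mutual_info p A B C * ln 2 =
    (\<Sum>(a, b, c)\<in>A \<times> B \<times> C. rel_entr (p (a, b, c)) (\<Sum>b'\<in>B. p (a, b', c)))
  - (\<Sum>(b, c)\<in>B \<times> C. rel_entr (\<Sum>a\<in>A. p (a, b, c)) (\<Sum>(a, b')\<in>A \<times> B. p (a, b', c)))"
proof -
  let ?pac = "\<lambda>a c. \<Sum>b'\<in>B. p (a, b', c)"
  let ?pbc = "\<lambda>b c. \<Sum>a\<in>A. p (a, b, c)"
  let ?pc = "\<lambda>c. \<Sum>(a, b')\<in>A \<times> B. p (a, b', c)"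
  have summand: "(if p (a, b, c) = 0 then 0
        else p (a, b, c) * log 2 (p (a, b, c) * ?pc c / (?pac a c * ?pbc b c))) * ln 2
      = rel_entr (p (a, b, c)) (?pac a c) - p (a, b, c) * ln (?pbc b c / ?pc c)"
    if abc: "a \<in> A" "b \<in> B" "c \<in> C" for a b c
  proof (cases "p (a, b, c) = 0")
    case True
    then show ?thesis by (simp add: rel_entr_def)
  next
    case False
    then have "0 < p (a, b, c)" using nonneg abc by (simp add: order_less_le)
    moreover have "p (a, b, c) \<le> ?pac a c" "p (a, b, c) \<le> ?pbc b c"
      using fin abc nonneg by (auto intro: member_le_sum)
    moreover have "?pbc b c \<le> ?pc c"
      using fin abc nonneg by (intro sum_fiber_le_sum_Times) auto
    ultimately have "0 < ?pac a c" "0 < ?pbc b c" "0 < ?pc c" "0 < p (a, b, c)" by linarith+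
    then have "ln (p (a, b, c) * ?pc c / (?pac a c * ?pbc b c))
        = ln (p (a, b, c) / ?pac a c) - ln (?pbc b c / ?pc c)"
      by (simp add: ln_div ln_mult)
    then show ?thesis
      using False by (simp add: rel_entr_def log_def right_diff_distrib)
  qed
  have "cond_mutual_info p A B C * ln 2 = (\<Sum>(a, b, c)\<in>A \<times> B \<times> C.
      rel_entr (p (a, b, c)) (?pac a c) - p (a, b, c) * ln (?pbc b c / ?pc c))"
    unfolding cond_mutual_info_def Let_def sum_distrib_right[of _ "A \<times> B \<times> C"]
    by (intro sum.cong refl) (auto simp only: mem_Times_iff fst_conv snd_conv prod.case summand)
  also have "\<dots> = (\<Sum>(a, b, c)\<in>A \<times> B \<times> C. rel_entr (p (a, b, c)) (?pac a c))
      - (\<Sum>(a, b, c)\<in>A \<times> B \<times> C. p (a, b, c) * ln (?pbc b c / ?pc c))"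
    by (simp add: sum_subtractf case_prod_beta')
  also have "(\<Sum>(a, b, c)\<in>A \<times> B \<times> C. p (a, b, c) * ln (?pbc b c / ?pc c))
      = (\<Sum>a\<in>A. \<Sum>(b, c)\<in>B \<times> C. p (a, b, c) * ln (?pbc b c / ?pc c))"
    by (simp add: sum.cartesian_product)
  also have "\<dots> = (\<Sum>(b, c)\<in>B \<times> C. \<Sum>a\<in>A. p (a, b, c) * ln (?pbc b c / ?pc c))"
    by (subst sum.swap) (simp add: case_prod_beta')
  also have "\<dots> = (\<Sum>(b, c)\<in>B \<times> C. rel_entr (?pbc b c) (?pc c))"
    by (intro sum.cong) (auto simp: rel_entr_def simp flip: sum_distrib_right)
  finally show ?thesis .
qed

lemma convex_nonneg_functions: "convex {p :: 'a \<Rightarrow> real. \<forall>x. 0 \<le> p x}"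
  by (rule convexI) (simp add: scaleR_fun_def)

lemma convex_on_rel_entr_marginals:
  fixes A :: "'a set" and B :: "'b set" and C :: "'c set"
  assumes "finite A" "finite B"
  shows "convex_on {p. \<forall>x. 0 \<le> p x}
    (\<lambda>p. \<Sum>(b, c)\<in>B \<times> C. rel_entr (\<Sum>a\<in>A. p (a, b, c)) (\<Sum>(a, b')\<in>A \<times> B. p (a, b', c)))"
  unfolding convex_on_def
proof (intro conjI convex_nonneg_functions ballI allI impI)
  let ?pbc = "\<lambda>p b c. \<Sum>a\<in>A. p (a, b, c)"
  let ?pc = "\<lambda>p c. \<Sum>(a, b')\<in>A \<times> B. p (a, b', c)"
  fix p\<^sub>1 p\<^sub>2 :: "'a \<times> 'b \<times> 'c \<Rightarrow> real" and t s :: real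
  assume "p\<^sub>1 \<in> {p. \<forall>x. 0 \<le> p x}" "p\<^sub>2 \<in> {p. \<forall>x. 0 \<le> p x}" and ts: "0 \<le> t" "0 \<le> s"
  then have nonneg: "\<And>x. 0 \<le> p\<^sub>1 x" "\<And>x. 0 \<le> p\<^sub>2 x" by auto
  have "(\<Sum>(b, c)\<in>B \<times> C. rel_entr (?pbc (t *\<^sub>R p\<^sub>1 + s *\<^sub>R p\<^sub>2) b c) (?pc (t *\<^sub>R p\<^sub>1 + s *\<^sub>R p\<^sub>2) c))
      \<le> (\<Sum>(b, c)\<in>B \<times> C. t * rel_entr (?pbc p\<^sub>1 b c) (?pc p\<^sub>1 c) + s * rel_entr (?pbc p\<^sub>2 b c) (?pc p\<^sub>2 c))"
  proof (intro sum_mono, clarify)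
    fix b c assume "b \<in> B"
    have "rel_entr (t * ?pbc p\<^sub>1 b c + s * ?pbc p\<^sub>2 b c) (t * ?pc p\<^sub>1 c + s * ?pc p\<^sub>2 c)
        \<le> t * rel_entr (?pbc p\<^sub>1 b c) (?pc p\<^sub>1 c) + s * rel_entr (?pbc p\<^sub>2 b c) (?pc p\<^sub>2 c)"
      using assms \<open>b \<in> B\<close> nonneg ts
      by (intro rel_entr_comb_le sum_nonneg sum_fiber_le_sum_Times) auto
    then show "rel_entr (?pbc (t *\<^sub>R p\<^sub>1 + s *\<^sub>R p\<^sub>2) b c) (?pc (t *\<^sub>R p\<^sub>1 + s *\<^sub>R p\<^sub>2) c)
        \<le> t * rel_entr (?pbc p\<^sub>1 b c) (?pc p\<^sub>1 c) + s * rel_entr (?pbc p\<^sub>2 b c) (?pc p\<^sub>2 c)"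
      by (simp add: scaleR_fun_def sum.distrib sum_distrib_left split_def)
  qed
  then show "(\<Sum>(b, c)\<in>B \<times> C. rel_entr (?pbc (t *\<^sub>R p\<^sub>1 + s *\<^sub>R p\<^sub>2) b c) (?pc (t *\<^sub>R p\<^sub>1 + s *\<^sub>R p\<^sub>2) c))
      \<le> t * (\<Sum>(b, c)\<in>B \<times> C. rel_entr (?pbc p\<^sub>1 b c) (?pc p\<^sub>1 c))
        + s * (\<Sum>(b, c)\<in>B \<times> C. rel_entr (?pbc p\<^sub>2 b c) (?pc p\<^sub>2 c))"
    by (simp add: sum.distrib sum_distrib_left split_def)
qed

lemma concave_on_linear: "linear f \<Longrightarrow> convex S \<Longrightarrow> concave_on S f"
  by (simp add: concave_on_iff linear_add linear_scale)

lemma concave_on_compose_linear: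
  assumes "linear f" "convex S" "f ` S \<subseteq> T" "concave_on T g"
  shows "concave_on S (\<lambda>x. g (f x))"
  using assms by (auto simp: concave_on_iff linear_add linear_scale image_subset_iff)

lemma concave_on_cong: "concave_on S f \<Longrightarrow> (\<And>x. x \<in> S \<Longrightarrow> f x = g x) \<Longrightarrow> concave_on S g"
  by (auto simp: concave_on_iff convexD)

lemma convex_Vset: "convex (Vset \<eta> N)"
proof (rule convexI)
  fix v\<^sub>1 v\<^sub>2 :: "tup \<Rightarrow> real" and t s :: real
  assume "v\<^sub>1 \<in> Vset \<eta> N" "v\<^sub>2 \<in> Vset \<eta> N" and ts: "0 \<le> t" "0 \<le> s" "t + s = 1"
  have comb: "(t *\<^sub>R v\<^sub>1 + s *\<^sub>R v\<^sub>2) x = t * v\<^sub>1 x + s * v\<^sub>2 x" for x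
    by (simp add: scaleR_fun_def)
  show "t *\<^sub>R v\<^sub>1 + s *\<^sub>R v\<^sub>2 \<in> Vset \<eta> N"
    using \<open>v\<^sub>1 \<in> Vset \<eta> N\<close> \<open>v\<^sub>2 \<in> Vset \<eta> N\<close> ts
    unfolding Vset_def mem_Collect_eq split_def comb
    by (simp only: sum.distrib flip: sum_distrib_left) (auto simp: distrib_left distrib_right mult.left_commute)
qed

definition uxq_marginal :: "nat \<Rightarrow> (tup \<Rightarrow> real) \<Rightarrow> (nat \<times> nat) \<times> nat \<times> nat \<Rightarrow> real" where
  "uxq_marginal N v =
     (\<lambda>((up, u), x, q). \<Sum>(s, sp, qp)\<in>Sset \<times> Sset \<times> {0..N}. v (s, u, q, x, sp, up, qp))"

lemma linear_uxq_marginal: "linear (uxq_marginal N)"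
  by (rule linearI)
    (auto simp: uxq_marginal_def scaleR_fun_def split_def sum.distrib sum_distrib_left fun_eq_iff)

lemma uxq_marginal_nonneg: "(\<And>t. 0 \<le> v t) \<Longrightarrow> 0 \<le> uxq_marginal N v z"
  by (auto simp: uxq_marginal_def split_def intro!: sum_nonneg)

lemma Vset_outside_support:
  "v \<in> Vset \<eta> N \<Longrightarrow> x \<noteq> f_enc up s \<Longrightarrow> v (s, u, q, x, sp, up, qp) = 0"
  by (auto simp: Vset_def Aset_def)

lemma Vset_nonneg: "v \<in> Vset \<eta> N \<Longrightarrow> 0 \<le> v t"
  by (cases t) (simp add: Vset_def)

definition x_law :: "real \<Rightarrow> nat \<times> nat \<Rightarrow> nat \<Rightarrow> real" where
  "x_law \<eta> = (\<lambda>(up, u) x.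
     if up \<noteq> 0 then (if x = 0 then 1 else 0)
     else if x = 0 then (1 - \<eta>) ^ (u + 1) else 1 - (1 - \<eta>) ^ (u + 1))"

lemma uxq_marginal_cond_law:
  assumes v: "v \<in> Vset \<eta> N" and "u \<le> N" "q \<le> N" "x \<in> Sset"
  shows "uxq_marginal N v ((up, u), x, q)
    = x_law \<eta> (up, u) x * (\<Sum>x'\<in>Sset. uxq_marginal N v ((up, u), x', q))"
proof (cases "up = 0")
  case True
  have "v (Suc 0, u, q, 0, sp, 0, qp) = 0" "v (0, u, q, Suc 0, sp, 0, qp) = 0" for sp qp
    using Vset_outside_support[OF v] by (simp_all add: f_enc_def)
  moreover have "(\<Sum>(x, sp, qp)\<in>Sset \<times> Sset \<times> {0..N}. v (0, u, q, x, sp, 0, qp))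
      = (1 - \<eta>) ^ (u + 1) *
        (\<Sum>(s, x, sp, qp)\<in>Sset \<times> Sset \<times> Sset \<times> {0..N}. v (s, u, q, x, sp, 0, qp))"
    using v assms by (auto simp: Vset_def)
  ultimately show ?thesis
    using True \<open>x \<in> Sset\<close>
    by (auto simp: uxq_marginal_def x_law_def Sset_def sum.cartesian_product' algebra_simps)
next
  case False
  have "v (s, u, q, Suc 0, sp, up, qp) = 0" for s sp qp
    using Vset_outside_support[OF v] False by (simp add: f_enc_def)
  then show ?thesis
    using False \<open>x \<in> Sset\<close> by (auto simp: uxq_marginal_def x_law_def Sset_def)
qed

definition neg_entropy_x_given_uq :: "real \<Rightarrow> nat \<Rightarrow> ((nat \<times> nat) \<times> nat \<times> nat \<Rightarrow> real) \<Rightarrow> real"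
  where "neg_entropy_x_given_uq \<eta> N p = (\<Sum>(a, x, q)\<in>({0..N} \<times> {0..N}) \<times> Sset \<times> {0..N}.
    (\<Sum>x'\<in>Sset. p (a, x', q)) * rel_entr (x_law \<eta> a x) 1)"

definition neg_entropy_x_given_q :: "nat \<Rightarrow> ((nat \<times> nat) \<times> nat \<times> nat \<Rightarrow> real) \<Rightarrow> real"
  where "neg_entropy_x_given_q N p = (\<Sum>(x, q)\<in>Sset \<times> {0..N}.
    rel_entr (\<Sum>a\<in>{0..N} \<times> {0..N}. p (a, x, q)) (\<Sum>(a, x')\<in>({0..N} \<times> {0..N}) \<times> Sset. p (a, x', q)))"

lemma linear_neg_entropy_x_given_uq: "linear (neg_entropy_x_given_uq \<eta> N)"
  by (rule linearI)
    (simp_all add: neg_entropy_x_given_uq_def scaleR_fun_def split_def sum.distrib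
      sum_distrib_left algebra_simps)

lemma convex_on_neg_entropy_x_given_q: "convex_on {p. \<forall>x. 0 \<le> p x} (neg_entropy_x_given_q N)"
  unfolding neg_entropy_x_given_q_def
  by (intro convex_on_rel_entr_marginals) (simp_all add: Sset_def)

lemma objective_eq_neg_entropies:
  assumes v: "v \<in> Vset \<eta> N"
  shows "objective N v * ln 2
    = neg_entropy_x_given_uq \<eta> N (uxq_marginal N v) - neg_entropy_x_given_q N (uxq_marginal N v)"
proof -
  let ?A = "{0..N} \<times> {0..N}" and ?p = "uxq_marginal N v"
  have "objective N v = cond_mutual_info ?p ?A Sset {0..N}"
    by (simp add: objective_def uxq_marginal_def)
  then have "objective N v * ln 2
      = (\<Sum>(a, x, q)\<in>?A \<times> Sset \<times> {0..N}. rel_entr (?p (a, x, q)) (\<Sum>x'\<in>Sset. ?p (a, x', q)))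
        - neg_entropy_x_given_q N ?p"
    unfolding neg_entropy_x_given_q_def using uxq_marginal_nonneg Vset_nonneg[OF v]
    by (simp add: cond_mutual_info_eq_rel_entr Sset_def)
  also have "(\<Sum>(a, x, q)\<in>?A \<times> Sset \<times> {0..N}. rel_entr (?p (a, x, q)) (\<Sum>x'\<in>Sset. ?p (a, x', q)))
      = neg_entropy_x_given_uq \<eta> N ?p"
    unfolding neg_entropy_x_given_uq_def
    by (intro sum.cong refl) (auto simp: uxq_marginal_cond_law[OF v] rel_entr_mult_self)
  finally show ?thesis .
qed

theorem lemma1:
  fixes \<eta> :: real and N :: nat
  assumes "0 \<le> \<eta>" and "\<eta> \<le> 1"
  shows "convex (Vset \<eta> N) \<and> concave_on (Vset \<eta> N) (objective N)"
proof -
  let ?F = "\<lambda>p. (neg_entropy_x_given_uq \<eta> N p - neg_entropy_x_given_q N p) / ln 2"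
  have "concave_on {p. \<forall>x. 0 \<le> p x} ?F"
    by (intro concave_on_cdiv concave_on_diff concave_on_linear linear_neg_entropy_x_given_uq
        convex_nonneg_functions convex_on_neg_entropy_x_given_q) simp
  then have "concave_on (Vset \<eta> N) (\<lambda>v. ?F (uxq_marginal N v))"
    using uxq_marginal_nonneg Vset_nonneg
    by (intro concave_on_compose_linear[OF linear_uxq_marginal convex_Vset]) auto
  moreover have "?F (uxq_marginal N v) = objective N v" if "v \<in> Vset \<eta> N" for v
    using objective_eq_neg_entropies[OF that] by (simp add: field_simps)
  ultimately show ?thesis
    using convex_Vset concave_on_cong by blast
qed

end
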